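(* Let $\nu(dx)=f(x)\,dx$ be a measure on $\mathbb{R}$ such that $E=\operatorname{supp}f$ is a bounded subset of $\mathbb{R}$, and such that for some constants $C>\varepsilon>0$ we have $|f-C|<\varepsilon$ on $E$. Let $\nu'(dx)=C\chi_E(x)\,dx$, $\nu_t=D_t^*(\nu)$ and $\nu'_t=D_t^*(\nu')$. Let $\mu$ be a probability measure on $\mathbb{R}$ whose support is bounded. Then $$\left|\liminf_{t\to0}\frac{H(\mu*\nu_t')}{|\log t|}-\liminf_{t\to0}\frac{H(\mu*\nu_t)}{|\log t|}\right|\le\varepsilon\lambda(E),$$ where $\lambda$ is Lebesgue measure.
   Context: For $t>0$, $D_t:\mathbb{R}\to\mathbb{R}$ is $x\mapsto tx$, and $D_t^*$ denotes push-forward by $D_t$. For non-negative measurable $q$, $H(q(x)\,dx)=\int q\log q\,dx$, even when $q\,dx$ is not a probability measure. *)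

theory Defs
  imports "HOL-Probability.Probability"
begin

definition fun_support :: "(real \<Rightarrow> real) \<Rightarrow> real set" where
  "fun_support f = closure {x. f x \<noteq> 0}"

definition measure_support :: "real measure \<Rightarrow> real set" where
  "measure_support M = {x. \<forall>e>0. emeasure M (ball x e) > 0}"

definition dilate :: "real \<Rightarrow> real measure \<Rightarrow> real measure" where
  "dilate t M = distr M borel (\<lambda>x. t * x)"

definition entropy_H :: "real measure \<Rightarrow> real" where
  "entropy_H M = (\<integral>x. (let q = enn2real (RN_deriv lborel M x) in q * ln q) \<partial>lborel)"

end

theory Submission
  imports Defs
begin

text \<open>Let k_t be the density of \<mu> * D_t(\<chi>_E dx). Then \<mu> * \<nu>'_t has density C k_t, and
  \<mu> * \<nu>_t has a density g_t with (C - \<epsilon>) k_t \<le> g_t \<le> (C + \<epsilon>) k_t. Moreover 0 \<le> k_t \<le> 1/t,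
  the integral of k_t is \<lambda>(E), and for t < 1 every k_t vanishes outside one fixed ball K.
  Writing g = a k with |a - C| \<le> \<epsilon>, the identity
  g ln g - C k ln (C k) = k (a ln a - C ln C) + (a - C) k ln k together with |k ln k| \<le> k |ln t| + 1
  gives |H(\<mu> * \<nu>_t) - H(\<mu> * \<nu>'_t)| \<le> c + \<epsilon> \<lambda>(E) |ln t| with c independent of t, and similarly
  |H(\<mu> * \<nu>'_t)| \<le> c' + C \<lambda>(E) |ln t|, which keeps both liminfs finite.
  After division by |ln t| only the term \<epsilon> \<lambda>(E) survives as t \<rightarrow> 0.\<close>

lemma AE_in_measure_support:
  fixes \<mu> :: "real measure"
  assumes sets_\<mu>: "sets \<mu> = sets borel"
  shows "AE y in \<mu>. y \<in> measure_support \<mu>"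
proof -
  define F where "F = {ball x e | x e. emeasure \<mu> (ball x e) = 0}"
  obtain F' where F': "F' \<subseteq> F" "countable F'" "\<Union>F' = \<Union>F"
    using Lindelof[of F] unfolding F_def by auto
  have "(\<Union>S\<in>F'. S) \<in> null_sets \<mu>"
  proof (rule null_sets_UN')
    fix S assume "S \<in> F'"
    then obtain x e where "S = ball x e" "emeasure \<mu> (ball x e) = 0"
      using F' unfolding F_def by blast
    then show "S \<in> null_sets \<mu>" using sets_\<mu> by (simp add: null_sets_def)
  qed fact
  then have null: "\<Union>F' \<in> null_sets \<mu>" by simp
  have "{y \<in> space \<mu>. y \<notin> measure_support \<mu>} \<subseteq> \<Union>F'"
  proof
    fix y assume "y \<in> {y \<in> space \<mu>. y \<notin> measure_support \<mu>}"
    then obtain e where "e > 0" "emeasure \<mu> (ball y e) = 0"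
      unfolding measure_support_def by (auto simp: not_gr_zero)
    then have "ball y e \<in> F" "y \<in> ball y e" unfolding F_def by auto
    then show "y \<in> \<Union>F'" using F'(3) by blast
  qed
  then show ?thesis by (rule AE_I'[OF null])
qed

section \<open>Convolution with a dilated density\<close>

lemma dilate_density:
  fixes q :: "real \<Rightarrow> real"
  assumes [measurable]: "q \<in> borel_measurable borel" and t: "t > 0"
  shows "dilate t (density lborel (\<lambda>x. ennreal (q x))) = density lborel (\<lambda>x. ennreal (q (x / t) / t))"
proof (rule measure_eqI)
  fix A assume "A \<in> sets (dilate t (density lborel (\<lambda>x. ennreal (q x))))"
  then have [measurable]: "A \<in> sets borel" by (simp add: dilate_def)
  have "emeasure (density lborel (\<lambda>x. ennreal (q (x / t) / t))) A
      = (\<integral>\<^sup>+x. ennreal (q (x / t) / t) * indicator A x \<partial>lborel)"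
    by (simp add: emeasure_density)
  also have "\<dots> = ennreal \<bar>t\<bar> * (\<integral>\<^sup>+x. ennreal (q ((0 + t * x) / t) / t) * indicator A (0 + t * x) \<partial>lborel)"
    by (rule nn_integral_real_affine) (use t in auto)
  also have "\<dots> = (\<integral>\<^sup>+x. ennreal t * (ennreal (q x / t) * indicator A (t * x)) \<partial>lborel)"
    using t by (subst nn_integral_cmult) auto
  also have "\<dots> = (\<integral>\<^sup>+x. ennreal (q x) * indicator ((\<lambda>x. t * x) -` A) x \<partial>lborel)"
    using t by (intro nn_integral_cong) (simp add: ennreal_mult'[symmetric] indicator_def)
  also have "\<dots> = emeasure (dilate t (density lborel (\<lambda>x. ennreal (q x)))) A"
  proof -
    have "(\<lambda>x. t * x) -` A \<in> sets lborel"
      using measurable_sets[of "\<lambda>x. t * x" borel borel A] by simp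
    then show ?thesis
      unfolding dilate_def by (simp add: emeasure_distr emeasure_density)
  qed
  finally show "emeasure (dilate t (density lborel (\<lambda>x. ennreal (q x)))) A
      = emeasure (density lborel (\<lambda>x. ennreal (q (x / t) / t))) A" ..
qed (simp add: dilate_def)

lemma convolution_density_right:
  fixes p :: "real \<Rightarrow> ennreal" and \<mu> :: "real measure"
  assumes [measurable]: "p \<in> borel_measurable borel"
    and "finite_measure \<mu>" "finite_measure (density lborel p)"
    and [measurable_cong]: "sets \<mu> = sets borel"
  shows "\<mu> \<star> density lborel p = density lborel (\<lambda>x. \<integral>\<^sup>+y. p (x - y) \<partial>\<mu>)"
proof (rule measure_eqI)
  interpret finite_measure \<mu> by fact
  interpret pair_sigma_finite \<mu> lborel ..
  fix A assume "A \<in> sets (\<mu> \<star> density lborel p)"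
  then have [measurable]: "A \<in> sets borel" by simp
  have "emeasure (\<mu> \<star> density lborel p) A = (\<integral>\<^sup>+y. \<integral>\<^sup>+x. p x * indicator A (y + x) \<partial>lborel \<partial>\<mu>)"
    using assms by (simp add: convolution_emeasure' nn_integral_density)
  also have "\<dots> = (\<integral>\<^sup>+y. \<integral>\<^sup>+x. p (x - y) * indicator A x \<partial>lborel \<partial>\<mu>)"
  proof (rule nn_integral_cong)
    fix y
    show "(\<integral>\<^sup>+x. p x * indicator A (y + x) \<partial>lborel) = (\<integral>\<^sup>+x. p (x - y) * indicator A x \<partial>lborel)"
      using nn_integral_real_affine[of "\<lambda>x. p (x - y) * indicator A x" 1 y] by simp
  qed
  also have "\<dots> = (\<integral>\<^sup>+x. \<integral>\<^sup>+y. p (x - y) * indicator A x \<partial>\<mu> \<partial>lborel)"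
    by (rule Fubini'[symmetric]) simp
  also have "\<dots> = (\<integral>\<^sup>+x. (\<integral>\<^sup>+y. p (x - y) \<partial>\<mu>) * indicator A x \<partial>lborel)"
    by (simp add: nn_integral_multc)
  also have "\<dots> = emeasure (density lborel (\<lambda>x. \<integral>\<^sup>+y. p (x - y) \<partial>\<mu>)) A"
    by (simp add: emeasure_density)
  finally show "emeasure (\<mu> \<star> density lborel p) A = emeasure (density lborel (\<lambda>x. \<integral>\<^sup>+y. p (x - y) \<partial>\<mu>)) A" .
qed simp

lemma entropy_H_density:
  assumes [measurable]: "G \<in> borel_measurable borel"
  shows "entropy_H (density lborel G) = (\<integral>x. enn2real (G x) * ln (enn2real (G x)) \<partial>lborel)"
proof -
  have "AE x in lborel. G x = RN_deriv lborel (density lborel G) x"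
    using assms by (intro sigma_finite_measure.RN_deriv_unique[OF lborel.sigma_finite_measure_axioms]) auto
  then show ?thesis
    unfolding entropy_H_def Let_def by (intro integral_cong_AE) (auto elim!: AE_mp)
qed

lemma finite_measure_density_le_indicator:
  fixes q :: "real \<Rightarrow> real"
  assumes "q \<in> borel_measurable borel" "\<And>x. q x \<le> c * indicator E x"
    and "E \<in> sets borel" "emeasure lborel E < \<infinity>"
  shows "finite_measure (density lborel (\<lambda>x. ennreal (q x)))"
proof (rule finite_measureI)
  have "emeasure (density lborel (\<lambda>x. ennreal (q x))) UNIV = (\<integral>\<^sup>+x. ennreal (q x) \<partial>lborel)"
    using assms by (simp add: emeasure_density)
  also have "\<dots> \<le> (\<integral>\<^sup>+x. ennreal c * indicator E x \<partial>lborel)"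
  proof (rule nn_integral_mono)
    fix x show "ennreal (q x) \<le> ennreal c * indicator E x"
      using ennreal_leI[OF assms(2)[of x]] by (cases "x \<in> E") auto
  qed
  also have "\<dots> < \<infinity>"
    using assms by (simp add: nn_integral_cmult_indicator ennreal_mult_less_top)
  finally show "emeasure (density lborel (\<lambda>x. ennreal (q x))) (space (density lborel (\<lambda>x. ennreal (q x)))) \<noteq> \<infinity>"
    by simp
qed

definition conv_dilate_density :: "real measure \<Rightarrow> real \<Rightarrow> (real \<Rightarrow> real) \<Rightarrow> real \<Rightarrow> ennreal" where
  "conv_dilate_density \<mu> t q x = (\<integral>\<^sup>+y. ennreal (q ((x - y) / t) / t) \<partial>\<mu>)"

lemma borel_measurable_conv_dilate_density:
  assumes "sigma_finite_measure \<mu>" and [measurable_cong]: "sets \<mu> = sets borel"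
    and [measurable]: "q \<in> borel_measurable borel"
  shows "conv_dilate_density \<mu> t q \<in> borel_measurable borel"
  unfolding conv_dilate_density_def[abs_def]
  by (rule sigma_finite_measure.borel_measurable_nn_integral[OF assms(1)]) simp

lemma convolution_dilate_density:
  fixes q :: "real \<Rightarrow> real" and \<mu> :: "real measure"
  assumes [measurable]: "q \<in> borel_measurable borel"
    and q_fin: "finite_measure (density lborel (\<lambda>x. ennreal (q x)))"
    and "finite_measure \<mu>" "sets \<mu> = sets borel" "t > 0"
  shows "\<mu> \<star> dilate t (density lborel (\<lambda>x. ennreal (q x))) = density lborel (conv_dilate_density \<mu> t q)"
proof -
  have "finite_measure (dilate t (density lborel (\<lambda>x. ennreal (q x))))"
    unfolding dilate_def by (rule finite_measure.finite_measure_distr[OF q_fin]) simp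
  then show ?thesis
    using assms unfolding dilate_density[OF assms(1) \<open>t > 0\<close>] conv_dilate_density_def[abs_def]
    by (subst convolution_density_right) auto
qed

lemma entropy_H_convolution_dilate:
  fixes q :: "real \<Rightarrow> real" and \<mu> :: "real measure"
  assumes "q \<in> borel_measurable borel" "finite_measure (density lborel (\<lambda>x. ennreal (q x)))"
    and "finite_measure \<mu>" "sets \<mu> = sets borel" "t > 0"
  shows "entropy_H (\<mu> \<star> dilate t (density lborel (\<lambda>x. ennreal (q x))))
    = (\<integral>x. enn2real (conv_dilate_density \<mu> t q x) * ln (enn2real (conv_dilate_density \<mu> t q x)) \<partial>lborel)"
  using assms
  by (simp add: convolution_dilate_density entropy_H_density borel_measurable_conv_dilate_density
      finite_measure.sigma_finite_measure)

lemma conv_dilate_density_mono: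
  assumes "t > 0" "\<And>z. q z \<le> q' z"
  shows "conv_dilate_density \<mu> t q x \<le> conv_dilate_density \<mu> t q' x"
  unfolding conv_dilate_density_def
  using assms by (intro nn_integral_mono ennreal_leI divide_right_mono) auto

lemma conv_dilate_density_cmult:
  assumes [measurable_cong]: "sets \<mu> = sets borel" and [measurable]: "q \<in> borel_measurable borel"
    and "t > 0" "c \<ge> 0"
  shows "conv_dilate_density \<mu> t (\<lambda>z. c * q z) x = ennreal c * conv_dilate_density \<mu> t q x"
  unfolding conv_dilate_density_def using assms
  by (subst nn_integral_cmult[symmetric]) (auto intro!: nn_integral_cong simp: ennreal_mult'[symmetric])

lemma conv_dilate_density_indicator_le:
  assumes "prob_space \<mu>" "t > 0"
  shows "conv_dilate_density \<mu> t (indicator E) x \<le> ennreal (1 / t)"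
proof -
  interpret prob_space \<mu> by fact
  have "conv_dilate_density \<mu> t (indicator E) x \<le> (\<integral>\<^sup>+y. ennreal (1 / t) \<partial>\<mu>)"
    unfolding conv_dilate_density_def
    using assms by (intro nn_integral_mono ennreal_leI) (auto simp: indicator_def)
  then show ?thesis by (simp add: emeasure_space_1)
qed

lemma conv_dilate_density_eq_0:
  assumes \<mu>_bdd: "AE y in \<mu>. \<bar>y\<bar> \<le> R" and q_bdd: "\<And>z. z \<notin> cball 0 r \<Longrightarrow> q z = 0"
    and t: "0 < t" "t \<le> 1" and x: "x \<notin> cball 0 (R + r)"
  shows "conv_dilate_density \<mu> t q x = 0"
proof -
  have "AE y in \<mu>. ennreal (q ((x - y) / t) / t) = 0"
    using \<mu>_bdd
  proof eventually_elim
    fix y assume "\<bar>y\<bar> \<le> R"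
    then have "r < \<bar>x - y\<bar>" using x by (simp add: dist_real_def)
    also have "\<bar>x - y\<bar> \<le> \<bar>(x - y) / t\<bar>"
      using t by (simp add: abs_divide le_divide_eq mult_left_le)
    finally show "ennreal (q ((x - y) / t) / t) = 0" using q_bdd by (simp add: dist_real_def)
  qed
  from nn_integral_cong_AE[OF this] show ?thesis
    unfolding conv_dilate_density_def by simp
qed

lemma nn_integral_conv_dilate_density:
  fixes q :: "real \<Rightarrow> real"
  assumes "prob_space \<mu>" and [measurable_cong]: "sets \<mu> = sets borel"
    and [measurable]: "q \<in> borel_measurable borel" and t: "t > 0"
  shows "(\<integral>\<^sup>+x. conv_dilate_density \<mu> t q x \<partial>lborel) = (\<integral>\<^sup>+z. ennreal (q z) \<partial>lborel)"
proof -
  interpret prob_space \<mu> by fact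
  interpret pair_sigma_finite \<mu> lborel ..
  have shift: "(\<integral>\<^sup>+x. ennreal (q ((x - y) / t) / t) \<partial>lborel) = (\<integral>\<^sup>+z. ennreal (q z) \<partial>lborel)" for y
  proof -
    have "(\<integral>\<^sup>+x. ennreal (q ((x - y) / t) / t) \<partial>lborel)
        = ennreal \<bar>t\<bar> * (\<integral>\<^sup>+z. ennreal (q ((y + t * z - y) / t) / t) \<partial>lborel)"
      by (rule nn_integral_real_affine) (use t in auto)
    also have "\<dots> = (\<integral>\<^sup>+z. ennreal t * ennreal (q z / t) \<partial>lborel)"
      using t by (subst nn_integral_cmult) auto
    also have "\<dots> = (\<integral>\<^sup>+z. ennreal (q z) \<partial>lborel)"
      using t by (intro nn_integral_cong) (simp add: ennreal_mult'[symmetric])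
    finally show ?thesis .
  qed
  have "(\<integral>\<^sup>+x. conv_dilate_density \<mu> t q x \<partial>lborel)
      = (\<integral>\<^sup>+y. \<integral>\<^sup>+x. ennreal (q ((x - y) / t) / t) \<partial>lborel \<partial>\<mu>)"
    unfolding conv_dilate_density_def by (rule Fubini') measurable
  then show ?thesis by (simp add: shift emeasure_space_1)
qed

lemma enn2real_conv_dilate_density_between:
  fixes q :: "real \<Rightarrow> real"
  assumes "prob_space \<mu>" and sets_\<mu>[measurable_cong]: "sets \<mu> = sets borel"
    and [measurable]: "q \<in> borel_measurable borel" "E \<in> sets borel"
    and t: "t > 0" and ab: "0 \<le> a" "0 \<le> b"
    and q: "\<And>z. a * indicator E z \<le> q z" "\<And>z. q z \<le> b * indicator E z"
  shows "a * enn2real (conv_dilate_density \<mu> t (indicator E) x) \<le> enn2real (conv_dilate_density \<mu> t q x)"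
    and "enn2real (conv_dilate_density \<mu> t q x) \<le> b * enn2real (conv_dilate_density \<mu> t (indicator E) x)"
proof -
  have E_fin: "conv_dilate_density \<mu> t (indicator E) x < \<infinity>"
    using conv_dilate_density_indicator_le[OF assms(1) t, of E x] by (simp add: le_less_trans)
  have "ennreal a * conv_dilate_density \<mu> t (indicator E) x = conv_dilate_density \<mu> t (\<lambda>z. a * indicator E z) x"
    using sets_\<mu> t ab by (intro conv_dilate_density_cmult[symmetric]) simp_all
  also have "\<dots> \<le> conv_dilate_density \<mu> t q x"
    using t q by (intro conv_dilate_density_mono)
  finally have lower: "ennreal a * conv_dilate_density \<mu> t (indicator E) x \<le> conv_dilate_density \<mu> t q x" .
  have "conv_dilate_density \<mu> t q x \<le> conv_dilate_density \<mu> t (\<lambda>z. b * indicator E z) x"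
    using t q by (intro conv_dilate_density_mono)
  also have "\<dots> = ennreal b * conv_dilate_density \<mu> t (indicator E) x"
    using sets_\<mu> t ab by (intro conv_dilate_density_cmult) simp_all
  finally have upper: "conv_dilate_density \<mu> t q x \<le> ennreal b * conv_dilate_density \<mu> t (indicator E) x" .
  have "ennreal b * conv_dilate_density \<mu> t (indicator E) x < \<infinity>"
    using E_fin by (simp add: ennreal_mult_less_top)
  then show "a * enn2real (conv_dilate_density \<mu> t (indicator E) x) \<le> enn2real (conv_dilate_density \<mu> t q x)"
    and "enn2real (conv_dilate_density \<mu> t q x) \<le> b * enn2real (conv_dilate_density \<mu> t (indicator E) x)"
    using enn2real_mono[OF lower] enn2real_mono[OF upper] upper ab by (auto simp: enn2real_mult le_less_trans)
qed

lemma has_bochner_integral_conv_dilate_density_indicator: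
  assumes "prob_space \<mu>" "sets \<mu> = sets borel"
    and "E \<in> sets borel" "emeasure lborel E < \<infinity>" "t > 0"
  shows "has_bochner_integral lborel (\<lambda>x. enn2real (conv_dilate_density \<mu> t (indicator E) x)) (measure lborel E)"
proof (rule has_bochner_integral_nn_integral)
  have fin: "conv_dilate_density \<mu> t (indicator E) x \<noteq> \<infinity>" for x
    using conv_dilate_density_indicator_le[of \<mu> t E x] assms by (auto simp: top_unique)
  have "(\<integral>\<^sup>+x. ennreal (enn2real (conv_dilate_density \<mu> t (indicator E) x)) \<partial>lborel)
      = (\<integral>\<^sup>+x. conv_dilate_density \<mu> t (indicator E) x \<partial>lborel)"
    using fin by (intro nn_integral_cong) (simp add: less_top)
  also have "\<dots> = emeasure lborel E"
    using assms by (simp add: nn_integral_conv_dilate_density ennreal_indicator)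
  finally show "(\<integral>\<^sup>+x. ennreal (enn2real (conv_dilate_density \<mu> t (indicator E) x)) \<partial>lborel) = ennreal (measure lborel E)"
    using assms by (simp add: emeasure_eq_ennreal_measure)
  show "(\<lambda>x. enn2real (conv_dilate_density \<mu> t (indicator E) x)) \<in> borel_measurable lborel"
    using borel_measurable_conv_dilate_density[of \<mu> "indicator E" t] assms
    by (simp add: prob_space_imp_sigma_finite)
qed auto

section \<open>Estimates for x ln x\<close>

lemma diff_one_le_mult_ln:
  fixes u :: real
  assumes "u \<ge> 0"
  shows "u - 1 \<le> u * ln u"
proof (cases "u = 0")
  case False
  then have "u > 0" using assms by simp
  then have "- ln u \<le> 1 / u - 1"
    using ln_le_minus_one[of "1 / u"] by (simp add: ln_div)
  then have "u * (- ln u) \<le> u * (1 / u - 1)"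
    using \<open>u > 0\<close> by (intro mult_left_mono) auto
  then show ?thesis using \<open>u > 0\<close> by (simp add: algebra_simps)
qed simp

lemma abs_mult_ln_le_square:
  fixes u :: real
  assumes "u \<ge> 0"
  shows "\<bar>u * ln u\<bar> \<le> u\<^sup>2 + 1"
proof (cases "u = 0")
  case False
  then have "u > 0" using assms by simp
  then have "u * ln u \<le> u * (u - 1)"
    using ln_le_minus_one[of u] by (intro mult_left_mono) auto
  then have "u * ln u \<le> u\<^sup>2 - u" by (simp add: power2_eq_square algebra_simps)
  moreover have "u - 1 \<le> u * ln u" by (rule diff_one_le_mult_ln[OF assms])
  ultimately show ?thesis
    using \<open>u > 0\<close> zero_le_power2[of u] unfolding abs_le_iff by (intro conjI; linarith)
qed simp

lemma abs_mult_ln_le_minus_ln: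
  fixes k t :: real
  assumes t: "0 < t" "t < 1" and k: "0 \<le> k" "k \<le> 1 / t"
  shows "\<bar>k * ln k\<bar> \<le> k * (- ln t) + 1"
proof (cases "k = 0")
  case False
  then have "k > 0" using k by simp
  then have "ln k \<le> ln (1 / t)" using k t by simp
  then have "ln k \<le> - ln t" using t by (simp add: ln_div)
  then have "k * ln k \<le> k * (- ln t)" using \<open>k > 0\<close> by (intro mult_left_mono) auto
  moreover have "k * (- ln t) \<ge> 0" using \<open>k > 0\<close> t by (intro mult_nonneg_nonneg) auto
  ultimately show ?thesis using diff_one_le_mult_ln[OF k(1)] k by (auto simp: abs_le_iff)
qed simp

lemma abs_mult_ln_diff_le:
  fixes k t g C \<epsilon> :: real
  assumes eps: "0 < \<epsilon>" "\<epsilon> < C" and t: "0 < t" "t < 1" and k: "0 \<le> k" "k \<le> 1 / t"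
    and g: "(C - \<epsilon>) * k \<le> g" "g \<le> (C + \<epsilon>) * k"
  shows "\<bar>g * ln g - (C * k) * ln (C * k)\<bar>
     \<le> ((C + \<epsilon>) * (\<bar>ln (C - \<epsilon>)\<bar> + \<bar>ln (C + \<epsilon>)\<bar>) + C * \<bar>ln C\<bar>) * k + \<epsilon> * (k * (- ln t) + 1)"
proof (cases "k = 0")
  case True
  then show ?thesis using g eps by simp
next
  case False
  then have "k > 0" using k by simp
  define a where "a = g / k"
  have a: "C - \<epsilon> \<le> a" "a \<le> C + \<epsilon>" "g = a * k"
    unfolding a_def using g \<open>k > 0\<close> by (simp_all add: field_simps)
  then have "a > 0" "\<bar>a - C\<bar> \<le> \<epsilon>" using eps by auto
  have "ln (C - \<epsilon>) \<le> ln a" "ln a \<le> ln (C + \<epsilon>)" using a \<open>a > 0\<close> eps by simp_all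
  then have "\<bar>ln a\<bar> \<le> \<bar>ln (C - \<epsilon>)\<bar> + \<bar>ln (C + \<epsilon>)\<bar>" by linarith
  then have "\<bar>a * ln a\<bar> \<le> (C + \<epsilon>) * (\<bar>ln (C - \<epsilon>)\<bar> + \<bar>ln (C + \<epsilon>)\<bar>)"
    using a \<open>a > 0\<close> unfolding abs_mult by (intro mult_mono) auto
  moreover have "\<bar>C * ln C\<bar> = C * \<bar>ln C\<bar>" using eps by (simp add: abs_mult)
  ultimately have "\<bar>a * ln a - C * ln C\<bar> \<le> (C + \<epsilon>) * (\<bar>ln (C - \<epsilon>)\<bar> + \<bar>ln (C + \<epsilon>)\<bar>) + C * \<bar>ln C\<bar>"
    using abs_triangle_ineq4[of "a * ln a" "C * ln C"] by linarith
  then have "\<bar>k * (a * ln a - C * ln C)\<bar> \<le> ((C + \<epsilon>) * (\<bar>ln (C - \<epsilon>)\<bar> + \<bar>ln (C + \<epsilon>)\<bar>) + C * \<bar>ln C\<bar>) * k"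
    using \<open>k > 0\<close> unfolding abs_mult by (simp add: mult.commute mult_left_mono)
  moreover have "\<bar>(a - C) * (k * ln k)\<bar> \<le> \<epsilon> * (k * (- ln t) + 1)"
    unfolding abs_mult using \<open>\<bar>a - C\<bar> \<le> \<epsilon>\<close> abs_mult_ln_le_minus_ln[OF t k] by (intro mult_mono) auto
  moreover have "g * ln g - (C * k) * ln (C * k) = k * (a * ln a - C * ln C) + (a - C) * (k * ln k)"
    using \<open>a > 0\<close> \<open>k > 0\<close> eps by (simp add: a(3) ln_mult algebra_simps)
  ultimately show ?thesis by (smt (verit) abs_triangle_ineq)
qed

lemma integrable_mult_ln:
  fixes h :: "real \<Rightarrow> real"
  assumes [measurable]: "h \<in> borel_measurable borel" and "\<And>x. 0 \<le> h x" "\<And>x. h x \<le> M"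
    and "\<And>x. x \<notin> K \<Longrightarrow> h x = 0" and "K \<in> sets borel" "emeasure lborel K < \<infinity>"
  shows "integrable lborel (\<lambda>x. h x * ln (h x))"
proof (rule Bochner_Integration.integrable_bound)
  show "integrable lborel (\<lambda>x. (M\<^sup>2 + 1) * indicator K x)"
    using assms by (intro integrable_mult_right integrable_real_indicator) auto
  have "\<bar>h x * ln (h x)\<bar> \<le> M\<^sup>2 + 1" for x
  proof -
    have "(h x)\<^sup>2 \<le> M\<^sup>2" using assms(2,3) by (intro power_mono)
    then show ?thesis using abs_mult_ln_le_square[OF assms(2)] by (smt (verit))
  qed
  then show "AE x in lborel. norm (h x * ln (h x)) \<le> norm ((M\<^sup>2 + 1) * indicator K x)"
    using assms(4) by (auto simp: indicator_def)
qed measurable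

lemma integral_mult_ln_bound:
  fixes k :: "real \<Rightarrow> real" and K :: "real set"
  assumes [measurable]: "k \<in> borel_measurable borel" and C: "0 < C" and t: "0 < t" "t < 1"
    and k: "\<And>x. 0 \<le> k x" "\<And>x. k x \<le> 1 / t"
    and K: "K \<in> sets borel" "emeasure lborel K < \<infinity>" "\<And>x. x \<notin> K \<Longrightarrow> k x = 0"
    and k_int: "integrable lborel k"
  shows "\<bar>\<integral>x. (C * k x) * ln (C * k x) \<partial>lborel\<bar>
     \<le> C * \<bar>ln C\<bar> * integral\<^sup>L lborel k + C * (- ln t) * integral\<^sup>L lborel k + C * measure lborel K"
proof -
  have pointwise: "\<bar>(C * k x) * ln (C * k x)\<bar> \<le> C * \<bar>ln C\<bar> * k x + C * (- ln t) * k x + C * indicator K x" for x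
  proof (cases "k x = 0")
    case False
    then have "x \<in> K" using K(3) by blast
    have "(C * k x) * ln (C * k x) = C * ln C * k x + C * (k x * ln (k x))"
      using C k(1)[of x] False by (simp add: ln_mult algebra_simps)
    then have "\<bar>(C * k x) * ln (C * k x)\<bar> \<le> \<bar>C * ln C * k x\<bar> + \<bar>C * (k x * ln (k x))\<bar>"
      by (simp only: abs_triangle_ineq)
    moreover have "\<bar>C * ln C * k x\<bar> = C * \<bar>ln C\<bar> * k x"
      using C k(1)[of x] by (simp add: abs_mult)
    moreover have "\<bar>C * (k x * ln (k x))\<bar> \<le> C * (- ln t) * k x + C"
      using mult_left_mono[OF abs_mult_ln_le_minus_ln[OF t k(1,2)], of C] C
      by (simp add: abs_mult algebra_simps)
    moreover have "C * indicator K x = C" using \<open>x \<in> K\<close> by simp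
    ultimately show ?thesis by linarith
  qed (use C in simp)
  have "\<bar>\<integral>x. (C * k x) * ln (C * k x) \<partial>lborel\<bar>
      \<le> (\<integral>x. C * \<bar>ln C\<bar> * k x + C * (- ln t) * k x + C * indicator K x \<partial>lborel)"
  proof (rule integral_abs_bound_integral)
    have Ck_le: "C * k x \<le> C / t" for x
      using mult_left_mono[OF k(2)[of x], of C] C by simp
    show "integrable lborel (\<lambda>x. (C * k x) * ln (C * k x))"
      by (rule integrable_mult_ln[OF _ _ Ck_le _ K(1,2)]) (use k C K(3) in auto)
  qed (use pointwise k_int K in \<open>auto intro!: integrable_real_indicator\<close>)
  also have "\<dots> = C * \<bar>ln C\<bar> * integral\<^sup>L lborel k + C * (- ln t) * integral\<^sup>L lborel k + C * measure lborel K"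
    using k_int K by (simp add: integrable_real_indicator)
  finally show ?thesis .
qed

lemma integral_mult_ln_perturbation:
  fixes k g :: "real \<Rightarrow> real" and K :: "real set"
  assumes [measurable]: "k \<in> borel_measurable borel" "g \<in> borel_measurable borel"
    and eps: "0 < \<epsilon>" "\<epsilon> < C" and t: "0 < t" "t < 1"
    and k: "\<And>x. 0 \<le> k x" "\<And>x. k x \<le> 1 / t"
    and g: "\<And>x. (C - \<epsilon>) * k x \<le> g x" "\<And>x. g x \<le> (C + \<epsilon>) * k x"
    and K: "K \<in> sets borel" "emeasure lborel K < \<infinity>" "\<And>x. x \<notin> K \<Longrightarrow> k x = 0"
    and k_int: "integrable lborel k"
  shows "\<bar>(\<integral>x. g x * ln (g x) \<partial>lborel) - (\<integral>x. (C * k x) * ln (C * k x) \<partial>lborel)\<bar>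
     \<le> ((C + \<epsilon>) * (\<bar>ln (C - \<epsilon>)\<bar> + \<bar>ln (C + \<epsilon>)\<bar>) + C * \<bar>ln C\<bar>) * integral\<^sup>L lborel k
        + \<epsilon> * (- ln t) * integral\<^sup>L lborel k + \<epsilon> * measure lborel K"
proof -
  define c where "c = (C + \<epsilon>) * (\<bar>ln (C - \<epsilon>)\<bar> + \<bar>ln (C + \<epsilon>)\<bar>) + C * \<bar>ln C\<bar>"
  have g_nonneg: "0 \<le> g x" for x
    using g(1)[of x] k(1)[of x] eps by (smt (verit) mult_nonneg_nonneg)
  have g_le: "g x \<le> (C + \<epsilon>) / t" for x
    using g(2)[of x] mult_left_mono[OF k(2)[of x], of "C + \<epsilon>"] eps by simp
  have g_K: "g x = 0" if "x \<notin> K" for x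
    using g_nonneg[of x] g(2)[of x] K(3)[OF that] by simp
  have Ck_le: "C * k x \<le> C / t" for x
    using mult_left_mono[OF k(2)[of x], of C] eps by simp
  have int_g: "integrable lborel (\<lambda>x. g x * ln (g x))"
    by (rule integrable_mult_ln[OF _ g_nonneg g_le g_K K(1,2)]) simp
  have int_Ck: "integrable lborel (\<lambda>x. (C * k x) * ln (C * k x))"
    by (rule integrable_mult_ln[OF _ _ Ck_le _ K(1,2)]) (use k eps K(3) in auto)
  have "\<bar>(\<integral>x. g x * ln (g x) \<partial>lborel) - (\<integral>x. (C * k x) * ln (C * k x) \<partial>lborel)\<bar>
      = \<bar>\<integral>x. g x * ln (g x) - (C * k x) * ln (C * k x) \<partial>lborel\<bar>"
    using int_g int_Ck by simp
  also have "\<dots> \<le> (\<integral>x. c * k x + \<epsilon> * (- ln t) * k x + \<epsilon> * indicator K x \<partial>lborel)"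
  proof (rule integral_abs_bound_integral)
    show "integrable lborel (\<lambda>x. g x * ln (g x) - (C * k x) * ln (C * k x))"
      using int_g int_Ck by simp
    fix x
    show "\<bar>g x * ln (g x) - (C * k x) * ln (C * k x)\<bar> \<le> c * k x + \<epsilon> * (- ln t) * k x + \<epsilon> * indicator K x"
      using abs_mult_ln_diff_le[OF eps t k(1,2) g(1,2), of x] g_K[of x] K(3)[of x] unfolding c_def
      by (cases "x \<in> K") (simp_all add: algebra_simps)
  qed (use k_int K in \<open>auto intro!: integrable_real_indicator\<close>)
  also have "\<dots> = c * integral\<^sup>L lborel k + \<epsilon> * (- ln t) * integral\<^sup>L lborel k + \<epsilon> * measure lborel K"
    using k_int K by (simp add: integrable_real_indicator)
  finally show ?thesis unfolding c_def .
qed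

lemma entropy_convolution_dilate_estimates:
  fixes q :: "real \<Rightarrow> real" and E :: "real set" and \<mu> :: "real measure"
  assumes [measurable]: "q \<in> borel_measurable borel" "E \<in> sets borel"
    and E_bdd: "E \<subseteq> cball 0 r"
    and q: "\<And>z. (C - \<epsilon>) * indicator E z \<le> q z" "\<And>z. q z \<le> (C + \<epsilon>) * indicator E z"
    and eps: "0 < \<epsilon>" "\<epsilon> < C"
    and \<mu>: "prob_space \<mu>" and sets_\<mu>[measurable_cong]: "sets \<mu> = sets borel"
    and \<mu>_bdd: "AE y in \<mu>. \<bar>y\<bar> \<le> R"
    and t: "0 < t" "t < 1"
  shows "\<bar>entropy_H (\<mu> \<star> dilate t (density lborel (\<lambda>x. ennreal (C * indicator E x))))\<bar>
      \<le> C * \<bar>ln C\<bar> * measure lborel E + C * measure lborel (cball (0::real) (R + r))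
         + C * measure lborel E * \<bar>ln t\<bar>"
    and "\<bar>entropy_H (\<mu> \<star> dilate t (density lborel (\<lambda>x. ennreal (C * indicator E x))))
          - entropy_H (\<mu> \<star> dilate t (density lborel (\<lambda>x. ennreal (q x))))\<bar>
      \<le> ((C + \<epsilon>) * (\<bar>ln (C - \<epsilon>)\<bar> + \<bar>ln (C + \<epsilon>)\<bar>) + C * \<bar>ln C\<bar>) * measure lborel E
         + \<epsilon> * measure lborel (cball (0::real) (R + r)) + \<epsilon> * measure lborel E * \<bar>ln t\<bar>"
proof -
  interpret prob_space \<mu> by fact
  have \<mu>_fin: "finite_measure \<mu>" by (rule finite_measure_axioms)
  define K where "K = cball (0::real) (R + r)"
  have E_fin: "emeasure lborel E < \<infinity>"
    using bounded_subset[OF bounded_cball E_bdd] by (rule emeasure_bounded_finite)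
  have K: "K \<in> sets borel" "emeasure lborel K < \<infinity>"
    unfolding K_def by (simp, rule emeasure_bounded_finite, simp)
  define k where "k x = enn2real (conv_dilate_density \<mu> t (indicator E) x)" for x
  define g where "g x = enn2real (conv_dilate_density \<mu> t q x)" for x
  have [measurable]: "k \<in> borel_measurable borel" "g \<in> borel_measurable borel"
    using borel_measurable_conv_dilate_density[OF prob_space_imp_sigma_finite[OF \<mu>] sets_\<mu>]
    unfolding k_def[abs_def] g_def[abs_def] by simp_all
  have k_le: "k x \<le> 1 / t" for x
    using enn2real_mono[OF conv_dilate_density_indicator_le[OF \<mu> t(1)]] t unfolding k_def by simp
  have E_out: "indicator E z = (0::real)" if "z \<notin> cball 0 r" for z
    using E_bdd that by (auto simp: indicator_def)
  have k_K: "k x = 0" if "x \<notin> K" for x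
    using conv_dilate_density_eq_0[OF \<mu>_bdd E_out t(1) less_imp_le[OF t(2)] that[unfolded K_def]]
    unfolding k_def by simp
  have k_int: "integrable lborel k" "integral\<^sup>L lborel k = measure lborel E"
    using has_bochner_integral_conv_dilate_density_indicator[OF \<mu> sets_\<mu> _ E_fin t(1)]
    unfolding k_def[abs_def] by (auto simp: has_bochner_integral_iff)
  have g: "(C - \<epsilon>) * k x \<le> g x" "g x \<le> (C + \<epsilon>) * k x" for x
    using enn2real_conv_dilate_density_between[OF \<mu> sets_\<mu> _ _ t(1) _ _ q] eps
    unfolding k_def g_def by simp_all
  have Ck: "enn2real (conv_dilate_density \<mu> t (\<lambda>z. C * indicator E z) x) = C * k x" for x
    using enn2real_conv_dilate_density_between[OF \<mu> sets_\<mu> _ _ t(1), of "\<lambda>z. C * indicator E z" E C C] eps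
    unfolding k_def by (intro antisym) simp_all
  have H_C: "entropy_H (\<mu> \<star> dilate t (density lborel (\<lambda>x. ennreal (C * indicator E x))))
      = (\<integral>x. (C * k x) * ln (C * k x) \<partial>lborel)"
    using entropy_H_convolution_dilate[OF _ _ \<mu>_fin sets_\<mu> t(1), of "\<lambda>x. C * indicator E x"]
      finite_measure_density_le_indicator[of "\<lambda>x. C * indicator E x" C E] E_fin
    by (simp add: Ck)
  have H_q: "entropy_H (\<mu> \<star> dilate t (density lborel (\<lambda>x. ennreal (q x))))
      = (\<integral>x. g x * ln (g x) \<partial>lborel)"
    using entropy_H_convolution_dilate[OF _ _ \<mu>_fin sets_\<mu> t(1), of q]
      finite_measure_density_le_indicator[OF _ q(2)] E_fin
    unfolding g_def by simp
  have k_nonneg: "0 \<le> k x" for x unfolding k_def by simp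
  have ln_t: "\<bar>ln t\<bar> = - ln t" using t by simp
  show "\<bar>entropy_H (\<mu> \<star> dilate t (density lborel (\<lambda>x. ennreal (C * indicator E x))))\<bar>
      \<le> C * \<bar>ln C\<bar> * measure lborel E + C * measure lborel (cball (0::real) (R + r))
         + C * measure lborel E * \<bar>ln t\<bar>"
    using integral_mult_ln_bound[OF _ _ t k_nonneg k_le K k_K k_int(1), of C] eps
    unfolding H_C k_int(2) ln_t K_def by (simp add: algebra_simps)
  show "\<bar>entropy_H (\<mu> \<star> dilate t (density lborel (\<lambda>x. ennreal (C * indicator E x))))
          - entropy_H (\<mu> \<star> dilate t (density lborel (\<lambda>x. ennreal (q x))))\<bar>
      \<le> ((C + \<epsilon>) * (\<bar>ln (C - \<epsilon>)\<bar> + \<bar>ln (C + \<epsilon>)\<bar>) + C * \<bar>ln C\<bar>) * measure lborel E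
         + \<epsilon> * measure lborel (cball (0::real) (R + r)) + \<epsilon> * measure lborel E * \<bar>ln t\<bar>"
    using integral_mult_ln_perturbation[OF _ _ eps t k_nonneg k_le g K k_K k_int(1)]
    unfolding H_C H_q k_int(2) ln_t K_def by (simp add: abs_minus_commute algebra_simps)
qed

section \<open>Liminfs of entropies normalised by |ln t|\<close>

lemma Liminf_ereal_bounded:
  fixes u :: "'a \<Rightarrow> real"
  assumes "F \<noteq> bot" "eventually (\<lambda>x. \<bar>u x\<bar> \<le> M) F"
  shows "\<bar>Liminf F (\<lambda>x. ereal (u x))\<bar> \<noteq> \<infinity>"
proof -
  have "ereal (- M) \<le> Liminf F (\<lambda>x. ereal (u x))"
    using assms(2) by (intro Liminf_bounded) (auto elim!: eventually_mono)
  moreover have "Limsup F (\<lambda>x. ereal (u x)) \<le> ereal M"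
    using assms(2) by (intro Limsup_bounded) (auto elim!: eventually_mono)
  then have "Liminf F (\<lambda>x. ereal (u x)) \<le> ereal M"
    using Liminf_le_Limsup[OF assms(1)] order_trans by blast
  ultimately show ?thesis by auto
qed

lemma Liminf_ereal_le_plus:
  fixes u v :: "'a \<Rightarrow> real"
  assumes "F \<noteq> bot" "\<And>\<eta>. \<eta> > 0 \<Longrightarrow> eventually (\<lambda>x. u x \<le> v x + (\<delta> + \<eta>)) F"
  shows "Liminf F (\<lambda>x. ereal (u x)) \<le> Liminf F (\<lambda>x. ereal (v x)) + ereal \<delta>"
proof (rule ereal_le_epsilon2)
  fix \<eta> :: real assume "\<eta> > 0"
  have "Liminf F (\<lambda>x. ereal (u x)) \<le> Liminf F (\<lambda>x. ereal (v x) + ereal (\<delta> + \<eta>))"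
    using assms(2)[OF \<open>\<eta> > 0\<close>] by (intro Liminf_mono) (auto elim!: eventually_mono)
  also have "\<dots> = Liminf F (\<lambda>x. ereal (v x)) + ereal \<delta> + ereal \<eta>"
    using Liminf_add_ereal_right[OF assms(1), of "ereal (\<delta> + \<eta>)" "\<lambda>x. ereal (v x)"]
    by (simp add: add.assoc)
  finally show "Liminf F (\<lambda>x. ereal (u x)) \<le> Liminf F (\<lambda>x. ereal (v x)) + ereal \<delta> + ereal \<eta>" .
qed

text \<open>The bound on f makes both Liminfs finite; this is needed because \<infinity> - \<infinity> = \<infinity> in ereal.\<close>

lemma Liminf_ereal_abs_diff_le:
  fixes f g :: "'a \<Rightarrow> real"
  assumes F: "F \<noteq> bot" and f_bdd: "eventually (\<lambda>x. \<bar>f x\<bar> \<le> M) F"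
    and close: "\<And>\<eta>. \<eta> > 0 \<Longrightarrow> eventually (\<lambda>x. \<bar>f x - g x\<bar> \<le> \<delta> + \<eta>) F"
  shows "\<bar>Liminf F (\<lambda>x. ereal (f x)) - Liminf F (\<lambda>x. ereal (g x))\<bar> \<le> ereal \<delta>"
proof -
  have "eventually (\<lambda>x. \<bar>g x\<bar> \<le> M + \<delta> + 1) F"
    using eventually_conj[OF f_bdd close[of 1]] by (auto elim!: eventually_mono)
  then obtain a b where a: "Liminf F (\<lambda>x. ereal (f x)) = ereal a" and b: "Liminf F (\<lambda>x. ereal (g x)) = ereal b"
    using Liminf_ereal_bounded[OF F f_bdd] Liminf_ereal_bounded[OF F] by (metis ereal_real)
  have "a \<le> b + \<delta>" "b \<le> a + \<delta>"
    using Liminf_ereal_le_plus[OF F, of f g \<delta>] Liminf_ereal_le_plus[OF F, of g f \<delta>] close a b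
    by (force elim!: eventually_mono)+
  then show ?thesis using a b by simp
qed

lemma Liminf_div_abs_ln_abs_diff_le:
  fixes X Y :: "real \<Rightarrow> real"
  assumes X_bdd: "\<And>t. 0 < t \<Longrightarrow> t < 1 \<Longrightarrow> \<bar>X t\<bar> \<le> a + b * \<bar>ln t\<bar>"
    and close: "\<And>t. 0 < t \<Longrightarrow> t < 1 \<Longrightarrow> \<bar>X t - Y t\<bar> \<le> c + \<delta> * \<bar>ln t\<bar>"
  shows "\<bar>Liminf (at_right 0) (\<lambda>t. ereal (X t / \<bar>ln t\<bar>))
           - Liminf (at_right 0) (\<lambda>t. ereal (Y t / \<bar>ln t\<bar>))\<bar> \<le> ereal \<delta>"
proof (rule Liminf_ereal_abs_diff_le)
  have large_ln: "eventually (\<lambda>t. 0 < t \<and> t < 1 \<and> L \<le> \<bar>ln t\<bar>) (at_right 0)" for L :: real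
  proof -
    have "eventually (\<lambda>t. ln t \<le> - L) (at_right (0::real))"
      using ln_at_0 by (simp add: filterlim_at_bot)
    moreover have "eventually (\<lambda>t. 0 < t \<and> t < 1) (at_right (0::real))"
      by (simp add: eventually_at_right_field) (auto intro!: exI[of _ 1])
    ultimately show ?thesis by eventually_elim auto
  qed
  show "eventually (\<lambda>t. \<bar>X t / \<bar>ln t\<bar>\<bar> \<le> \<bar>a\<bar> + b) (at_right 0)"
    using large_ln[of 1]
  proof eventually_elim
    case (elim t)
    define L where "L = \<bar>ln t\<bar>"
    have "L \<ge> 1" "\<bar>X t\<bar> \<le> a + b * L" using elim X_bdd[of t] unfolding L_def by auto
    then have "\<bar>X t\<bar> \<le> (\<bar>a\<bar> + b) * L"
      using mult_left_mono[of 1 L "\<bar>a\<bar>"] by (simp add: algebra_simps)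
    then show ?case
      using \<open>L \<ge> 1\<close> unfolding L_def[symmetric] by (simp add: abs_divide divide_le_eq)
  qed
  fix \<eta> :: real assume "\<eta> > 0"
  show "eventually (\<lambda>t. \<bar>X t / \<bar>ln t\<bar> - Y t / \<bar>ln t\<bar>\<bar> \<le> \<delta> + \<eta>) (at_right 0)"
    using large_ln[of "max 1 (\<bar>c\<bar> / \<eta>)"]
  proof eventually_elim
    case (elim t)
    define L where "L = \<bar>ln t\<bar>"
    have "L \<ge> 1" "\<bar>c\<bar> / \<eta> \<le> L" "\<bar>X t - Y t\<bar> \<le> c + \<delta> * L"
      using elim close[of t] unfolding L_def by auto
    then have "\<bar>X t - Y t\<bar> \<le> (\<delta> + \<eta>) * L"
      using \<open>\<eta> > 0\<close> by (simp add: divide_le_eq algebra_simps)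
    then show ?case
      using \<open>L \<ge> 1\<close> unfolding L_def[symmetric]
      by (simp add: diff_divide_distrib[symmetric] abs_divide divide_le_eq)
  qed
qed simp

theorem lemma2p6:
  fixes f :: "real \<Rightarrow> real" and C \<epsilon> :: real and \<mu> :: "real measure"
  assumes f_meas: "f \<in> borel_measurable borel"
    and f_nonneg: "\<And>x. f x \<ge> 0"
    and E_bdd: "bounded (fun_support f)"
    and eps_pos: "0 < \<epsilon>" and eps_C: "\<epsilon> < C"
    and f_close: "\<And>x. x \<in> fun_support f \<Longrightarrow> \<bar>f x - C\<bar> < \<epsilon>"
    and mu_prob: "prob_space \<mu>" and mu_sets: "sets \<mu> = sets borel"
    and mu_bdd: "bounded (measure_support \<mu>)"
  shows "abs (Liminf (at_right 0)
              (\<lambda>t. ereal (entropy_H (\<mu> \<star> dilate t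
                 (density lborel (\<lambda>x. ennreal (C * indicator (fun_support f) x)))) / abs (ln t)))
         - Liminf (at_right 0)
              (\<lambda>t. ereal (entropy_H (\<mu> \<star> dilate t
                 (density lborel (\<lambda>x. ennreal (f x)))) / abs (ln t))))
         \<le> ereal (\<epsilon> * measure lborel (fun_support f))"
proof -
  define E where "E = fun_support f"
  have E_sets: "E \<in> sets borel"
    unfolding E_def fun_support_def by (intro borel_closed closed_closure)
  obtain r where "\<forall>z\<in>E. norm z \<le> r"
    using E_bdd unfolding E_def bounded_iff by blast
  then have r: "E \<subseteq> cball 0 r" by (auto simp: dist_norm)
  have f_E: "f z = 0" if "z \<notin> E" for z
    using that closure_subset[of "{x. f x \<noteq> 0}"] unfolding E_def fun_support_def by auto
  have f_between: "(C - \<epsilon>) * indicator E z \<le> f z" "f z \<le> (C + \<epsilon>) * indicator E z" for z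
    using f_close[of z] f_E[of z] unfolding E_def[symmetric]
    by (cases "z \<in> E"; simp add: abs_less_iff)+
  obtain R where R: "AE y in \<mu>. \<bar>y\<bar> \<le> R"
  proof -
    obtain R where "\<And>y. y \<in> measure_support \<mu> \<Longrightarrow> \<bar>y\<bar> \<le> R"
      using mu_bdd unfolding bounded_iff by auto
    with AE_in_measure_support[OF mu_sets] have "AE y in \<mu>. \<bar>y\<bar> \<le> R"
      by (auto elim!: eventually_mono)
    then show ?thesis by (rule that)
  qed
  note estimates = entropy_convolution_dilate_estimates[OF f_meas E_sets r f_between eps_pos eps_C
      mu_prob mu_sets R]
  show ?thesis
    unfolding E_def[symmetric] by (rule Liminf_div_abs_ln_abs_diff_le[OF estimates])
qed

end
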